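(* For any positive integer $n$, there exists a $(3;\ 6^n,\ 3^n,\ 3)$ perfect hash family.
   Context: Let $r,m,q',t$ be integers with $m\ge q'\ge t\ge2$. An $(r;m,q',t)$ perfect hash family (PHF) is a set $\mathcal{X}$ of $r$ functions from a set $\mathcal{B}$ with $|\mathcal{B}|=m$ to a set $\mathcal{C}$ with $|\mathcal{C}|=q'$ such that for every $\mathcal{T}\subseteq\mathcal{B}$ with $|\mathcal{T}|=t$ there is at least one $\varphi\in\mathcal{X}$ whose restriction to $\mathcal{T}$ is injective. Equivalently, an $r\times m$ array over $q'$ symbols in which every $r\times t$ subarray has at least one row with $t$ distinct symbols. *)

theory Defs
  imports Main "HOL-Library.FuncSet"
begin

text \<open>Functions are taken extensional (PiE B (%_. C)) so that distinct
  members of X are distinct as functions on B.\<close>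

definition PHF :: "nat \<Rightarrow> nat \<Rightarrow> nat \<Rightarrow> nat \<Rightarrow> ('b \<Rightarrow> 'c) set \<Rightarrow> 'b set \<Rightarrow> 'c set \<Rightarrow> bool" where
  "PHF r m q t X B C \<longleftrightarrow>
     finite B \<and> card B = m \<and> finite C \<and> card C = q \<and>
     X \<subseteq> PiE B (\<lambda>_. C) \<and> finite X \<and> card X = r \<and>
     (\<forall>T. T \<subseteq> B \<and> card T = t \<longrightarrow> (\<exists>\<phi>\<in>X. inj_on \<phi> T))"

definition exists_PHF :: "nat \<Rightarrow> nat \<Rightarrow> nat \<Rightarrow> nat \<Rightarrow> bool" where
  "exists_PHF r m q t \<longleftrightarrow>
     (\<exists>X :: (nat \<Rightarrow> nat) set. PHF r m q t X {..<m} {..<q})"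

end

theory Submission
  imports Defs
begin

text \<open>Call an array good if every 3 columns are separated by some row and any two distinct
  columns agree in fewer than half of the rows. Goodness is preserved by the row-wise product of
  two arrays with the same rows: a 3-set of column pairs on which neither coordinate is injective
  has the shape {(a,c), (a,d), (b,c)} with a \<noteq> b and c \<noteq> d, and since a, b and c, d each agree
  in fewer than half of the rows, some row separates a from b and c from d at once, hence
  separates the triple. Powers of a good 3 x 6 array over 3 symbols are good 3 x 6^n arrays over
  3^n symbols. As 3^n < 6^n no row is injective, and as two columns agree in at most one of the
  three rows, the three rows are distinct functions and form the perfect hash family.\<close>

definition agreement_rows :: "'i set \<Rightarrow> ('i \<Rightarrow> 'b \<Rightarrow> 'c) \<Rightarrow> 'b \<Rightarrow> 'b \<Rightarrow> 'i set" where
  "agreement_rows I F x y = {i \<in> I. F i x = F i y}"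

definition rarely_agreeing :: "'i set \<Rightarrow> 'b set \<Rightarrow> ('i \<Rightarrow> 'b \<Rightarrow> 'c) \<Rightarrow> bool" where
  "rarely_agreeing I B F \<longleftrightarrow>
     (\<forall>x\<in>B. \<forall>y\<in>B. x \<noteq> y \<longrightarrow> 2 * card (agreement_rows I F x y) < card I)"

definition perfect_hash3 :: "'i set \<Rightarrow> 'b set \<Rightarrow> ('i \<Rightarrow> 'b \<Rightarrow> 'c) \<Rightarrow> bool" where
  "perfect_hash3 I B F \<longleftrightarrow> (\<forall>T\<subseteq>B. card T = 3 \<longrightarrow> (\<exists>i\<in>I. inj_on (F i) T))"

definition good_array :: "'i set \<Rightarrow> 'b set \<Rightarrow> 'c set \<Rightarrow> ('i \<Rightarrow> 'b \<Rightarrow> 'c) \<Rightarrow> bool" where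
  "good_array I B C F \<longleftrightarrow>
     (\<forall>i\<in>I. F i \<in> B \<rightarrow> C) \<and> rarely_agreeing I B F \<and> perfect_hash3 I B F"

definition array_prod :: "('i \<Rightarrow> 'a \<Rightarrow> 'c) \<Rightarrow> ('i \<Rightarrow> 'b \<Rightarrow> 'd) \<Rightarrow> 'i \<Rightarrow> 'a \<times> 'b \<Rightarrow> 'c \<times> 'd" where
  "array_prod F G i p = (F i (fst p), G i (snd p))"

lemma perfect_hash3_iff:
  "perfect_hash3 I B F \<longleftrightarrow>
     (\<forall>x\<in>B. \<forall>y\<in>B. \<forall>z\<in>B. x \<noteq> y \<and> y \<noteq> z \<and> x \<noteq> z \<longrightarrow>
        (\<exists>i\<in>I. F i x \<noteq> F i y \<and> F i y \<noteq> F i z \<and> F i x \<noteq> F i z))"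
proof
  assume H: "perfect_hash3 I B F"
  show "\<forall>x\<in>B. \<forall>y\<in>B. \<forall>z\<in>B. x \<noteq> y \<and> y \<noteq> z \<and> x \<noteq> z \<longrightarrow>
      (\<exists>i\<in>I. F i x \<noteq> F i y \<and> F i y \<noteq> F i z \<and> F i x \<noteq> F i z)"
  proof (intro ballI impI)
    fix x y z assume "x \<in> B" "y \<in> B" "z \<in> B" and ne: "x \<noteq> y \<and> y \<noteq> z \<and> x \<noteq> z"
    then have "{x, y, z} \<subseteq> B" "card {x, y, z} = 3" by auto
    then obtain i where "i \<in> I" "inj_on (F i) {x, y, z}"
      using H unfolding perfect_hash3_def by blast
    then show "\<exists>i\<in>I. F i x \<noteq> F i y \<and> F i y \<noteq> F i z \<and> F i x \<noteq> F i z"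
      using ne by (auto dest: inj_onD)
  qed
next
  assume H: "\<forall>x\<in>B. \<forall>y\<in>B. \<forall>z\<in>B. x \<noteq> y \<and> y \<noteq> z \<and> x \<noteq> z \<longrightarrow>
      (\<exists>i\<in>I. F i x \<noteq> F i y \<and> F i y \<noteq> F i z \<and> F i x \<noteq> F i z)"
  show "perfect_hash3 I B F"
    unfolding perfect_hash3_def
  proof (intro allI impI)
    fix T assume "T \<subseteq> B" "card T = 3"
    then obtain x y z where T: "T = {x, y, z}" and "x \<in> B" "y \<in> B" "z \<in> B"
      and "x \<noteq> y" "y \<noteq> z" "x \<noteq> z"
      by (metis card_3_iff insert_subset)
    with H obtain i where "i \<in> I" "F i x \<noteq> F i y" "F i y \<noteq> F i z" "F i x \<noteq> F i z"
      by blast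
    then have "inj_on (F i) {x, y, z}" by auto
    with \<open>i \<in> I\<close> show "\<exists>i\<in>I. inj_on (F i) T" unfolding T by blast
  qed
qed

lemma rarely_agreeing_card_subset:
  assumes F: "rarely_agreeing I B F" and xy: "x \<in> B" "y \<in> B" "x \<noteq> y"
    and R: "R \<subseteq> agreement_rows I F x y"
  shows "2 * card R < card I"
proof -
  have agree: "2 * card (agreement_rows I F x y) < card I"
    using F xy unfolding rarely_agreeing_def by blast
  then have "finite I" using card.infinite by fastforce
  then have "card R \<le> card (agreement_rows I F x y)"
    using R by (intro card_mono) (auto simp: agreement_rows_def)
  with agree show ?thesis by linarith
qed

lemma rarely_agreeing_common_separating_row:
  assumes F: "rarely_agreeing I B F" and G: "rarely_agreeing I B' G"
    and ab: "a \<in> B" "b \<in> B" "a \<noteq> b" and cd: "c \<in> B'" "d \<in> B'" "c \<noteq> d"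
  shows "\<exists>i\<in>I. F i a \<noteq> F i b \<and> G i c \<noteq> G i d"
proof -
  have "card (agreement_rows I F a b \<union> agreement_rows I G c d)
      \<le> card (agreement_rows I F a b) + card (agreement_rows I G c d)"
    by (rule card_Un_le)
  also have "\<dots> < card I"
    using F G ab cd unfolding rarely_agreeing_def by fastforce
  finally have "agreement_rows I F a b \<union> agreement_rows I G c d \<noteq> I" by auto
  then show ?thesis unfolding agreement_rows_def by blast
qed

lemma rarely_agreeing_prod:
  assumes F: "rarely_agreeing I B F" and G: "rarely_agreeing I B' G"
  shows "rarely_agreeing I (B \<times> B') (array_prod F G)"
  unfolding rarely_agreeing_def
proof (intro ballI impI)
  fix p q assume p: "p \<in> B \<times> B'" and q: "q \<in> B \<times> B'" and "p \<noteq> q"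
  have rows: "agreement_rows I (array_prod F G) p q \<subseteq> agreement_rows I F (fst p) (fst q)"
    "agreement_rows I (array_prod F G) p q \<subseteq> agreement_rows I G (snd p) (snd q)"
    by (auto simp: agreement_rows_def array_prod_def)
  from \<open>p \<noteq> q\<close> consider "fst p \<noteq> fst q" | "snd p \<noteq> snd q" by (meson prod_eq_iff)
  then show "2 * card (agreement_rows I (array_prod F G) p q) < card I"
  proof cases
    case 1
    then show ?thesis using rarely_agreeing_card_subset[OF F _ _ _ rows(1)] p q by auto
  next
    case 2
    then show ?thesis using rarely_agreeing_card_subset[OF G _ _ _ rows(2)] p q by auto
  qed
qed

lemma card_3_not_inj_fst_snd:
  assumes T: "card T = 3" and fst: "\<not> inj_on fst T" and snd: "\<not> inj_on snd T"
  shows "\<exists>a b c d. a \<noteq> b \<and> c \<noteq> d \<and> T = {(a, c), (a, d), (b, c)}"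
proof -
  obtain u v where uv: "u \<in> T" "v \<in> T" "u \<noteq> v" "fst u = fst v"
    using fst unfolding inj_on_def by blast
  have "card (T - {u, v}) = 1"
    using T uv by (simp add: card_Diff_subset card.infinite)
  then obtain w where "T - {u, v} = {w}" by (rule card_1_singletonE)
  then have T_eq: "T = {u, v, w}" and "w \<noteq> u" "w \<noteq> v" using uv by auto
  have "snd u \<noteq> snd v" using uv prod_eq_iff by blast
  with snd have "snd w = snd u \<or> snd w = snd v"
    unfolding T_eq inj_on_def by auto
  then obtain u' v' where "{u', v'} = {u, v}" "fst u' = fst v'" "snd w = snd u'"
    using uv(4) by (metis insert_commute)
  moreover from this have "u' \<noteq> v'" "w \<noteq> u'" "T = {u', v', w}"
    using \<open>w \<noteq> u\<close> \<open>w \<noteq> v\<close> uv(3) T_eq by (auto simp: doubleton_eq_iff)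
  ultimately have "fst u' \<noteq> fst w" "snd u' \<noteq> snd v'" "T = {u', v', w}"
    using prod_eq_iff by metis+
  then show ?thesis
    using \<open>fst u' = fst v'\<close> \<open>snd w = snd u'\<close> by (metis prod.collapse)
qed

lemma perfect_hash3_prod:
  assumes F: "rarely_agreeing I B F" "perfect_hash3 I B F"
    and G: "rarely_agreeing I B' G" "perfect_hash3 I B' G"
  shows "perfect_hash3 I (B \<times> B') (array_prod F G)"
  unfolding perfect_hash3_def
proof (intro allI impI)
  fix T assume T: "T \<subseteq> B \<times> B'" "card T = 3"
  consider "inj_on fst T" | "inj_on snd T"
    | a b c d where "a \<noteq> b" "c \<noteq> d" "T = {(a, c), (a, d), (b, c)}"
    using card_3_not_inj_fst_snd[OF T(2)] by blast
  then show "\<exists>i\<in>I. inj_on (array_prod F G i) T"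
  proof cases
    case 1
    have "fst ` T \<subseteq> B" "card (fst ` T) = 3"
      using T card_image[OF 1] by auto
    then obtain i where "i \<in> I" "inj_on (F i) (fst ` T)"
      using F(2) unfolding perfect_hash3_def by blast
    then have "inj_on (fst \<circ> array_prod F G i) T"
      using comp_inj_on[OF 1] by (simp add: comp_def array_prod_def)
    then show ?thesis using \<open>i \<in> I\<close> inj_on_imageI2 by blast
  next
    case 2
    have "snd ` T \<subseteq> B'" "card (snd ` T) = 3"
      using T card_image[OF 2] by auto
    then obtain i where "i \<in> I" "inj_on (G i) (snd ` T)"
      using G(2) unfolding perfect_hash3_def by blast
    then have "inj_on (snd \<circ> array_prod F G i) T"
      using comp_inj_on[OF 2] by (simp add: comp_def array_prod_def)
    then show ?thesis using \<open>i \<in> I\<close> inj_on_imageI2 by blast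
  next
    case (3 a b c d)
    then have "a \<in> B" "b \<in> B" "c \<in> B'" "d \<in> B'" using T(1) by auto
    then obtain i where "i \<in> I" "F i a \<noteq> F i b" "G i c \<noteq> G i d"
      using rarely_agreeing_common_separating_row[OF F(1) G(1)] 3 by blast
    then have "inj_on (array_prod F G i) {(a, c), (a, d), (b, c)}"
      using 3(1,2) by (simp add: array_prod_def)
    with \<open>i \<in> I\<close> show ?thesis unfolding 3(3) by blast
  qed
qed

lemma good_array_prod:
  assumes F: "good_array I B C F" and G: "good_array I B' C' G"
  shows "good_array I (B \<times> B') (C \<times> C') (array_prod F G)"
proof -
  have "array_prod F G i \<in> B \<times> B' \<rightarrow> C \<times> C'" if "i \<in> I" for i
    using F G that unfolding good_array_def array_prod_def by (auto simp: Pi_iff)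
  then show ?thesis
    using F G rarely_agreeing_prod perfect_hash3_prod unfolding good_array_def by blast
qed

lemma good_array_relabel:
  assumes good: "good_array I B C F"
    and h: "h \<in> B' \<rightarrow> B" "inj_on h B'" and g: "g \<in> C \<rightarrow> C'" "inj_on g C"
  shows "good_array I B' C' (\<lambda>i x. g (F i (h x)))"
proof -
  have maps: "F i \<in> B \<rightarrow> C" if "i \<in> I" for i
    using good that unfolding good_array_def by blast
  have same_rows: "agreement_rows I (\<lambda>i x. g (F i (h x))) x y = agreement_rows I F (h x) (h y)"
    if "x \<in> B'" "y \<in> B'" for x y
  proof -
    have "g (F i (h x)) = g (F i (h y)) \<longleftrightarrow> F i (h x) = F i (h y)" if "i \<in> I" for i
      using inj_on_eq_iff[OF g(2)] funcset_mem[OF maps[OF that]] funcset_mem[OF h(1)]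
        \<open>x \<in> B'\<close> \<open>y \<in> B'\<close> by blast
    then show ?thesis unfolding agreement_rows_def by blast
  qed
  have "rarely_agreeing I B' (\<lambda>i x. g (F i (h x)))"
    unfolding rarely_agreeing_def
  proof (intro ballI impI)
    fix x y assume xy: "x \<in> B'" "y \<in> B'" "x \<noteq> y"
    have "h x \<in> B" "h y \<in> B" using funcset_mem[OF h(1)] xy by auto
    moreover have "h x \<noteq> h y" using inj_on_eq_iff[OF h(2) xy(1,2)] xy(3) by simp
    ultimately have "2 * card (agreement_rows I F (h x) (h y)) < card I"
      using good unfolding good_array_def rarely_agreeing_def by blast
    then show "2 * card (agreement_rows I (\<lambda>i x. g (F i (h x))) x y) < card I"
      using same_rows[OF xy(1,2)] by simp
  qed
  moreover have "perfect_hash3 I B' (\<lambda>i x. g (F i (h x)))"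
    unfolding perfect_hash3_def
  proof (intro allI impI)
    fix T assume T: "T \<subseteq> B'" "card T = 3"
    have "inj_on h T" using h(2) T(1) by (rule inj_on_subset)
    moreover have "h ` T \<subseteq> B" using T(1) funcset_image[OF h(1)] by blast
    ultimately obtain i where "i \<in> I" "inj_on (F i) (h ` T)"
      using good T(2) card_image unfolding good_array_def perfect_hash3_def by metis
    moreover have "inj_on g (F i ` h ` T)"
      using g(2) funcset_image[OF maps[OF \<open>i \<in> I\<close>]] \<open>h ` T \<subseteq> B\<close>
      by (meson image_mono inj_on_subset subset_trans)
    ultimately have "inj_on (g \<circ> F i \<circ> h) T"
      using \<open>inj_on h T\<close> by (intro comp_inj_on)
    then show "\<exists>i\<in>I. inj_on (\<lambda>x. g (F i (h x))) T"
      using \<open>i \<in> I\<close> by (auto simp: comp_def)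
  qed
  moreover have "(\<lambda>x. g (F i (h x))) \<in> B' \<rightarrow> C'" if "i \<in> I" for i
    using h(1) g(1) maps[OF that] by (simp add: Pi_iff)
  ultimately show ?thesis unfolding good_array_def by blast
qed

lemma bij_betw_pair_encoding:
  fixes k l :: nat
  shows "bij_betw (\<lambda>(a, b). a + k * b) ({..<k} \<times> {..<l}) {..<k * l}"
proof (rule bij_betwI[where g = "\<lambda>x. (x mod k, x div k)"])
  show "(\<lambda>(a, b). a + k * b) \<in> {..<k} \<times> {..<l} \<rightarrow> {..<k * l}"
  proof clarsimp
    fix a b assume "a < k" "b < l"
    then have "a + k * b < k * (b + 1)" by simp
    also have "\<dots> \<le> k * l" using \<open>b < l\<close> by (intro mult_le_mono2) simp
    finally show "a + k * b < k * l" .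
  qed
  show "(\<lambda>x. (x mod k, x div k)) \<in> {..<k * l} \<rightarrow> {..<k} \<times> {..<l}"
    by (auto simp: less_mult_imp_div_less mult.commute intro!: mod_less_divisor Nat.gr0I)
qed auto

definition base_array :: "nat \<Rightarrow> nat \<Rightarrow> nat" where
  "base_array i x = [[0,0,1,1,2,2], [0,1,1,2,0,2], [0,1,2,0,2,1]] ! i ! x"

lemma good_base_array: "good_array {..<3} {..<6} {..<3} base_array"
proof -
  let ?rows = "[0..<3]" and ?cols = "[0..<6]"
  have "\<forall>i\<in>set ?rows. \<forall>x\<in>set ?cols. base_array i x < 3"
    unfolding base_array_def by code_simp
  then have maps: "\<forall>i\<in>set ?rows. base_array i \<in> set ?cols \<rightarrow> {..<3}" by auto
  have "\<forall>x\<in>set ?cols. \<forall>y\<in>set ?cols. x \<noteq> y \<longrightarrow>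
      2 * length (filter (\<lambda>i. base_array i x = base_array i y) ?rows) < 3"
    unfolding base_array_def by code_simp
  moreover have "card (agreement_rows (set ?rows) base_array x y)
      = length (filter (\<lambda>i. base_array i x = base_array i y) ?rows)" for x y
  proof -
    have "agreement_rows (set ?rows) base_array x y
        = set (filter (\<lambda>i. base_array i x = base_array i y) ?rows)"
      unfolding agreement_rows_def by auto
    then show ?thesis by (simp only: distinct_card distinct_filter distinct_upt)
  qed
  ultimately have "rarely_agreeing (set ?rows) (set ?cols) base_array"
    unfolding rarely_agreeing_def by simp
  moreover have "perfect_hash3 (set ?rows) (set ?cols) base_array"
    unfolding perfect_hash3_iff base_array_def by code_simp
  moreover have "set ?rows = {..<3}" "set ?cols = {..<6}" by auto
  ultimately show ?thesis using maps unfolding good_array_def by simp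
qed

lemma good_array_power:
  "\<exists>F :: nat \<Rightarrow> nat \<Rightarrow> nat. good_array {..<3} {..<6 ^ n} {..<3 ^ n} F"
proof (induction n)
  case 0
  have "good_array {..<3::nat} {0::nat} {0::nat} (\<lambda>_ _. 0)"
    unfolding good_array_def rarely_agreeing_def perfect_hash3_def
    by (auto dest: card_mono[rotated])
  moreover have "{..<6 ^ 0} = {0::nat}" "{..<3 ^ 0} = {0::nat}" by auto
  ultimately show ?case by metis
next
  case (Suc n)
  then obtain F :: "nat \<Rightarrow> nat \<Rightarrow> nat" where F: "good_array {..<3} {..<6 ^ n} {..<3 ^ n} F" ..
  have enc6: "bij_betw (\<lambda>(a, b). a + 6 * b) ({..<6} \<times> {..<6 ^ n}) {..<6 ^ Suc n :: nat}"
    using bij_betw_pair_encoding[of 6 "6 ^ n"] by simp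
  have enc3: "bij_betw (\<lambda>(a, b). a + 3 * b) ({..<3} \<times> {..<3 ^ n}) {..<3 ^ Suc n :: nat}"
    using bij_betw_pair_encoding[of 3 "3 ^ n"] by simp
  have dec6: "bij_betw (inv_into ({..<6} \<times> {..<6 ^ n}) (\<lambda>(a, b). a + 6 * b))
      {..<6 ^ Suc n :: nat} ({..<6} \<times> {..<6 ^ n})"
    by (rule bij_betw_inv_into[OF enc6])
  from good_array_relabel[OF good_array_prod[OF good_base_array F]
      bij_betw_imp_funcset[OF dec6] bij_betw_imp_inj_on[OF dec6]
      bij_betw_imp_funcset[OF enc3] bij_betw_imp_inj_on[OF enc3]]
  show ?case by blast
qed

lemma good_array_restrict_inj:
  assumes good: "good_array I B C F" and I: "card I \<le> 4"
    and C: "finite C" "card C < card B"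
  shows "inj_on (\<lambda>i. restrict (F i) B) I"
proof (rule inj_onI)
  fix i j assume ij: "i \<in> I" "j \<in> I" "restrict (F i) B = restrict (F j) B"
  have "F i \<in> B \<rightarrow> C" using good ij(1) unfolding good_array_def by blast
  then have "\<not> inj_on (F i) B"
    using card_inj_on_le[OF _ funcset_image C(1)] C(2) by fastforce
  then obtain x y where xy: "x \<in> B" "y \<in> B" "x \<noteq> y" "F i x = F i y"
    unfolding inj_on_def by blast
  then have "F j x = F j y" using ij(3) by (metis restrict_apply')
  then have "{i, j} \<subseteq> agreement_rows I F x y"
    using ij xy unfolding agreement_rows_def by blast
  then have "2 * card {i, j} < card I"
    using rarely_agreeing_card_subset[OF _ xy(1-3)] good unfolding good_array_def by metis
  with I show "i = j" by (cases "i = j") auto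
qed

lemma good_array_PHF:
  assumes good: "good_array I B C F" and I: "card I = 3"
    and C: "finite C" "card C < card B"
  shows "PHF 3 (card B) (card C) 3 ((\<lambda>i. restrict (F i) B) ` I) B C"
proof -
  have B: "finite B" using C(2) card.infinite by (metis less_nat_zero_code)
  have "card I \<le> 4" using I by simp
  then have card: "card ((\<lambda>i. restrict (F i) B) ` I) = 3"
    using card_image[OF good_array_restrict_inj[OF good _ C]] I by simp
  have PiE: "(\<lambda>i. restrict (F i) B) ` I \<subseteq> PiE B (\<lambda>_. C)"
    using good by (auto simp: good_array_def restrict_PiE_iff Pi_iff)
  have hash: "\<exists>\<phi>\<in>(\<lambda>i. restrict (F i) B) ` I. inj_on \<phi> T" if T: "T \<subseteq> B" "card T = 3" for T
  proof -
    obtain i where "i \<in> I" "inj_on (F i) T"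
      using good T unfolding good_array_def perfect_hash3_def by blast
    moreover have "inj_on (restrict (F i) B) T \<longleftrightarrow> inj_on (F i) T"
      using T(1) by (intro inj_on_cong) auto
    ultimately show ?thesis by blast
  qed
  have "finite ((\<lambda>i. restrict (F i) B) ` I)" using card by (metis card.infinite zero_neq_numeral)
  then show ?thesis
    unfolding PHF_def using B C(1) card PiE hash by blast
qed

theorem lemma8:
  fixes n :: nat
  assumes "n \<ge> 1"
  shows "exists_PHF 3 (6 ^ n) (3 ^ n) 3"
proof -
  obtain F :: "nat \<Rightarrow> nat \<Rightarrow> nat" where F: "good_array {..<3} {..<6 ^ n} {..<3 ^ n} F"
    using good_array_power by blast
  have "(3::nat) ^ n < 6 ^ n" using assms by (simp add: power_strict_mono)
  then have "PHF 3 (6 ^ n) (3 ^ n) 3 ((\<lambda>i. restrict (F i) {..<6 ^ n}) ` {..<3}) {..<6 ^ n} {..<3 ^ n}"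
    using good_array_PHF[OF F] by simp
  then show ?thesis unfolding exists_PHF_def by blast
qed

end
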